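(* For $k=1,2$ let $p_k,q_k\ge0$ be integers, $l_k=p_k+q_k$, $f_k\in\mathfrak H^{\odot p_k}\otimes\mathfrak H^{\odot q_k}$, and let $h_k$ be the reverse complex conjugate of $f_k$. Then for $0\le i\le p_1\wedge q_2$ and $0\le j\le q_1\wedge p_2$, $$\|f_1\tilde\otimes_{i,j}f_2\|_{\mathfrak H^{\otimes(l_1+l_2-2(i+j))}}\le\|f_1\otimes_{i,j}f_2\|_{\mathfrak H^{\otimes(l_1+l_2-2(i+j))}}\le\|f_1\|_{\mathfrak H^{\otimes l_1}}\|f_2\|_{\mathfrak H^{\otimes l_2}},$$ and $$\|f_1\otimes_{i,j}f_2\|^2_{\mathfrak H^{\otimes(l_1+l_2-2(i+j))}}\le\frac12\|f_1\otimes_{p_1-i,q_1-j}h_1\|^2_{\mathfrak H^{\otimes 2(i+j)}}+\frac12\|f_2\otimes_{p_2-j,q_2-i}h_2\|^2_{\mathfrak H^{\otimes 2(i+j)}}.$$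
   Context: Let $\mathfrak H$ be a complex separable Hilbert space with orthonormal basis $\{e_k\}_{k\ge1}$, and let $Z=\{Z(h):h\in\mathfrak H\}$ be a complex isonormal Gaussian process: a centered symmetric complex Gaussian family with $\mathbb E[Z(h)^2]=0$ and $\mathbb E[Z(g)\overline{Z(h)}]=\langle g,h\rangle_{\mathfrak H}$. The complex Hermite polynomials $H_{p,q}$ are defined by $\exp\{\lambda\bar z+\bar\lambda z-2|\lambda|^2\}=\sum_{p,q\ge0}\frac{\bar\lambda^p\lambda^q}{p!q!}H_{p,q}(z)$. The complex multiple Wiener–Itô integral $I_{p,q}$ on $\mathfrak H^{\odot p}\otimes\mathfrak H^{\odot q}$ is determined by $I_{p,q}\big((\tilde\otimes_k e_k^{\otimes p_k})\otimes(\tilde\otimes_k\overline{e_k}^{\otimes q_k})\big)=\prod_k 2^{-(p_k+q_k)/2}H_{p_k,q_k}(\sqrt2 Z(e_k))$ ($\sum p_k=p,\sum q_k=q$), extended linearly and continuously. The reverse complex conjugate of $f\in\mathfrak H^{\odot p}\otimes\mathfrak H^{\odot q}$ is the $h\in\mathfrak H^{\odot q}\otimes\mathfrak H^{\odot p}$ with $\overline{I_{p,q}(f)}=I_{q,p}(h)$ (for $\mathfrak H=L^2_{\mathbb C}(T,\mu)$: $h(t_1..t_q;s_1..s_p)=\overline{f(s_1..s_p;t_1..t_q)}$). For $f\in\mathfrak H^{\odot a}\otimes\mathfrak H^{\odot b}$, $g\in\mathfrak H^{\odot c}\otimes\mathfrak H^{\odot d}$, $0\le i\le a\wedge d$, $0\le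 j\le b\wedge c$, the contraction is $f\otimes_{i,j}g=\sum_{l_1,\dots,l_{i+j}}\langle f,e_{l_1}\otimes\cdots\otimes e_{l_i}\otimes\overline{e_{l_{i+1}}}\otimes\cdots\otimes\overline{e_{l_{i+j}}}\rangle\otimes\langle g,e_{l_{i+1}}\otimes\cdots\otimes e_{l_{i+j}}\otimes\overline{e_{l_1}}\otimes\cdots\otimes\overline{e_{l_i}}\rangle\in\mathfrak H^{\otimes(a+c-i-j)}\otimes\mathfrak H^{\otimes(b+d-i-j)}$; for $\mathfrak H=L^2_{\mathbb C}$, $f\otimes_{i,j}g(t_1..t_{a+c-i-j};s_1..s_{b+d-i-j})=\int f(t_1..t_{a-i},u_1..u_i;s_1..s_{b-j},v_1..v_j)\,g(t_{a-i+1}..t_{a+c-i-j},v_1..v_j;s_{b-j+1}..s_{b+d-i-j},u_1..u_i)\,d\vec u\,d\vec v$. $f\otimes_{0,0}g=f\otimes g$. $f\tilde\otimes_{i,j}g$ denotes the symmetrization of $f\otimes_{i,j}g$ (separately in its first $a+c-i-j$ and last $b+d-i-j$ arguments). *)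

theory Defs
  imports "HOL-Analysis.Analysis"
begin

text \<open>
  The Hilbert space H has an orthonormal basis indexed by a
  countable type 'b. An element f of H^{tensor a} tensor H^{tensor b} is represented by
  its coordinate array F (k, m) = inner product of f with
  e_{k_1} ... e_{k_a} tensor conj(e_{m_1}) ... conj(e_{m_b}),
  where k, m are lists of basis indices of length a and b. Only values on
  index lists of the right lengths are relevant.
\<close>

definition idx :: "nat \<Rightarrow> nat \<Rightarrow> ('b list \<times> 'b list) set" where
  "idx a b = {(k, m). length k = a \<and> length m = b}"

definition in_tensor :: "nat \<Rightarrow> nat \<Rightarrow> ('b list \<times> 'b list \<Rightarrow> complex) \<Rightarrow> bool" where
  "in_tensor a b F \<longleftrightarrow> (\<lambda>(k, m). (cmod (F (k, m)))\<^sup>2) summable_on idx a b"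

definition perm_list :: "(nat \<Rightarrow> nat) \<Rightarrow> 'b list \<Rightarrow> 'b list" where
  "perm_list \<sigma> xs = map (\<lambda>i. xs ! \<sigma> i) [0..<length xs]"

definition in_sym_tensor :: "nat \<Rightarrow> nat \<Rightarrow> ('b list \<times> 'b list \<Rightarrow> complex) \<Rightarrow> bool" where
  "in_sym_tensor a b F \<longleftrightarrow> in_tensor a b F \<and>
     (\<forall>k m \<sigma> \<tau>. length k = a \<longrightarrow> length m = b \<longrightarrow> \<sigma> permutes {..<a} \<longrightarrow> \<tau> permutes {..<b}
        \<longrightarrow> F (perm_list \<sigma> k, perm_list \<tau> m) = F (k, m))"

definition tnorm :: "nat \<Rightarrow> nat \<Rightarrow> ('b list \<times> 'b list \<Rightarrow> complex) \<Rightarrow> real" where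
  "tnorm a b F = sqrt (\<Sum>\<^sub>\<infinity>(k, m)\<in>idx a b. (cmod (F (k, m)))\<^sup>2)"

definition rev_conj :: "('b list \<times> 'b list \<Rightarrow> complex) \<Rightarrow> ('b list \<times> 'b list \<Rightarrow> complex)" where
  "rev_conj F = (\<lambda>(m, k). cnj (F (k, m)))"

text \<open>Contraction f tensor_{i,j} g for f of type (a,b), g of type (c,d); result of type
  (a+c-i-j, b+d-i-j):
  (f tensor_{i,j} g)(t t'; s s') = sum over u (length i), v (length j) of
   F(t u; s v) G(t' v; s' u), |t| = a-i, |s| = b-j.\<close>
definition contr :: "nat \<Rightarrow> nat \<Rightarrow> nat \<Rightarrow> nat \<Rightarrow>
    ('b list \<times> 'b list \<Rightarrow> complex) \<Rightarrow> ('b list \<times> 'b list \<Rightarrow> complex) \<Rightarrow>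
    ('b list \<times> 'b list \<Rightarrow> complex)" where
  "contr a b i j F G = (\<lambda>(x, y).
     \<Sum>\<^sub>\<infinity>(u, v)\<in>idx i j.
       F (take (a - i) x @ u, take (b - j) y @ v) * G (drop (a - i) x @ v, drop (b - j) y @ u))"

definition symmetrize :: "nat \<Rightarrow> nat \<Rightarrow> ('b list \<times> 'b list \<Rightarrow> complex) \<Rightarrow> ('b list \<times> 'b list \<Rightarrow> complex)" where
  "symmetrize n m C = (\<lambda>(x, y). (1 / of_nat (fact n * fact m)) *
     (\<Sum>\<sigma>\<in>{\<sigma>. \<sigma> permutes {..<n}}. \<Sum>\<tau>\<in>{\<tau>. \<tau> permutes {..<m}}. C (perm_list \<sigma> x, perm_list \<tau> y)))"

end

theory Submission
  imports Defs
begin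

(* Read f1 as a matrix A whose rows are indexed by its free coordinates and whose columns by
   the contracted ones, and f2 as a matrix B whose rows are indexed by the contracted coordinates.
   Up to a relabelling of coordinates the contraction of f1 and f2 is the product AB, and all
   norms are Hilbert-Schmidt norms.  Symmetrization is an average of coordinate permutations,
   each of which preserves the norm, so it cannot increase the norm.  The bound
   |AB| <= |A| |B| is the Cauchy-Schwarz inequality in every entry.  Finally, expanding the
   square and summing first over the free coordinates,
     |AB|^2 = sum over w, w' of P(w, w') Q(w, w'),  P = A^T conj(A),  Q = B B^*,
   so |AB|^2 <= |P| |Q| <= (|P|^2 + |Q|^2) / 2; as f1 and f2 are symmetric, P and Q are
   relabellings of the self-contractions of f1 with h1 and of f2 with h2. *)

section \<open>Infinite sums and Hilbert-Schmidt matrices\<close>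

lemma has_sum_sum:
  fixes f :: "'k \<Rightarrow> 'a \<Rightarrow> 'b::topological_comm_monoid_add"
  assumes "finite K" "\<And>k. k \<in> K \<Longrightarrow> (f k has_sum s k) A"
  shows "((\<lambda>x. \<Sum>k\<in>K. f k x) has_sum (\<Sum>k\<in>K. s k)) A"
  using assms by (induction K rule: finite_induct) (auto intro: has_sum_add)

lemma
  fixes f :: "'a \<Rightarrow> 'c::{real_normed_field,banach}" and g :: "'b \<Rightarrow> 'c"
  assumes f: "(\<lambda>x. norm (f x)) summable_on A" and g: "(\<lambda>y. norm (g y)) summable_on B"
  shows summable_on_product: "(\<lambda>(x, y). f x * g y) summable_on A \<times> B"
    and infsum_product: "(\<Sum>\<^sub>\<infinity>(x, y)\<in>A \<times> B. f x * g y) = infsum f A * infsum g B"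
proof -
  have "(\<lambda>z. norm ((\<lambda>(x, y). f x * g y) z)) summable_on A \<times> B"
    using summable_on_cmult_left[OF f] summable_on_cmult_right[OF g]
    by (subst Infinite_Sum.abs_summable_on_Sigma_iff)
       (auto simp: norm_mult infsum_cmult_right' infsum_nonneg)
  then show prod: "(\<lambda>(x, y). f x * g y) summable_on A \<times> B"
    by (rule abs_summable_summable)
  have "(\<Sum>\<^sub>\<infinity>(x, y)\<in>A \<times> B. f x * g y) = (\<Sum>\<^sub>\<infinity>x\<in>A. \<Sum>\<^sub>\<infinity>y\<in>B. f x * g y)"
    using infsum_Sigma'_banach[of "\<lambda>x y. f x * g y" A "\<lambda>_. B"] prod by simp
  also have "\<dots> = infsum f A * infsum g B"
    by (simp add: infsum_cmult_right' infsum_cmult_left')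
  finally show "(\<Sum>\<^sub>\<infinity>(x, y)\<in>A \<times> B. f x * g y) = infsum f A * infsum g B" .
qed

lemma
  fixes f g :: "'a \<Rightarrow> complex"
  assumes f: "(\<lambda>x. (cmod (f x))\<^sup>2) summable_on A" and g: "(\<lambda>x. (cmod (g x))\<^sup>2) summable_on A"
  shows norm_summable_on_mult: "(\<lambda>x. norm (f x * g x)) summable_on A"
    and infsum_Cauchy_Schwarz:
      "(cmod (\<Sum>\<^sub>\<infinity>x\<in>A. f x * g x))\<^sup>2 \<le> (\<Sum>\<^sub>\<infinity>x\<in>A. (cmod (f x))\<^sup>2) * (\<Sum>\<^sub>\<infinity>x\<in>A. (cmod (g x))\<^sup>2)"
proof -
  have "norm (f x * g x) \<le> (cmod (f x))\<^sup>2 + (cmod (g x))\<^sup>2" for x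
  proof -
    have "0 \<le> cmod (f x) * cmod (g x)"
      by simp
    then show ?thesis
      using sum_squares_bound[of "cmod (f x)" "cmod (g x)"] unfolding norm_mult by linarith
  qed
  then show norm_fg: "(\<lambda>x. norm (f x * g x)) summable_on A"
    by (rule Infinite_Sum.abs_summable_on_comparison_test'[OF summable_on_add[OF f g]])
  define Sf where "Sf = (\<Sum>\<^sub>\<infinity>x\<in>A. (cmod (f x))\<^sup>2)"
  define Sg where "Sg = (\<Sum>\<^sub>\<infinity>x\<in>A. (cmod (g x))\<^sup>2)"
  have "Sf \<ge> 0" "Sg \<ge> 0"
    unfolding Sf_def Sg_def by (simp_all add: infsum_nonneg)
  have "(\<Sum>\<^sub>\<infinity>x\<in>A. norm (f x * g x)) \<le> sqrt Sf * sqrt Sg"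
  proof (rule infsum_le_finite_sums[OF norm_fg])
    fix F assume F: "finite F" "F \<subseteq> A"
    have "(\<Sum>x\<in>F. (cmod (f x))\<^sup>2) \<le> Sf" "(\<Sum>x\<in>F. (cmod (g x))\<^sup>2) \<le> Sg"
      unfolding Sf_def Sg_def using finite_sum_le_infsum[OF f F] finite_sum_le_infsum[OF g F]
      by simp_all
    then have "(\<Sum>x\<in>F. cmod (f x) * cmod (g x))\<^sup>2 \<le> Sf * Sg"
      using Cauchy_Schwarz_ineq_sum[of "\<lambda>x. cmod (f x)" "\<lambda>x. cmod (g x)" F]
        mult_mono[of "\<Sum>x\<in>F. (cmod (f x))\<^sup>2" Sf "\<Sum>x\<in>F. (cmod (g x))\<^sup>2" Sg] \<open>Sf \<ge> 0\<close>
      by (simp add: sum_nonneg)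
    then show "(\<Sum>x\<in>F. norm (f x * g x)) \<le> sqrt Sf * sqrt Sg"
      by (simp add: norm_mult real_le_rsqrt sum_nonneg flip: real_sqrt_mult)
  qed
  moreover have "cmod (\<Sum>\<^sub>\<infinity>x\<in>A. f x * g x) \<le> (\<Sum>\<^sub>\<infinity>x\<in>A. norm (f x * g x))"
    by (rule norm_infsum_bound[OF norm_fg])
  ultimately have "cmod (\<Sum>\<^sub>\<infinity>x\<in>A. f x * g x) \<le> sqrt Sf * sqrt Sg"
    by linarith
  then have "(cmod (\<Sum>\<^sub>\<infinity>x\<in>A. f x * g x))\<^sup>2 \<le> (sqrt Sf * sqrt Sg)\<^sup>2"
    by (intro power_mono) auto
  then show "(cmod (\<Sum>\<^sub>\<infinity>x\<in>A. f x * g x))\<^sup>2 \<le> Sf * Sg"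
    using \<open>Sf \<ge> 0\<close> \<open>Sg \<ge> 0\<close> by (simp add: power_mult_distrib)
qed

lemma of_real_norm_infsum_square:
  fixes f :: "'a \<Rightarrow> complex"
  assumes "(\<lambda>x. norm (f x)) summable_on A"
  shows "complex_of_real ((cmod (infsum f A))\<^sup>2) = (\<Sum>\<^sub>\<infinity>(x, x')\<in>A \<times> A. f x * cnj (f x'))"
proof -
  have "(\<lambda>x. norm (cnj (f x))) summable_on A"
    using assms by simp
  then show ?thesis
    unfolding complex_norm_square using infsum_product[OF assms, of "\<lambda>x. cnj (f x)" A] by simp
qed

abbreviation hs_summable :: "('x \<Rightarrow> 'y \<Rightarrow> complex) \<Rightarrow> 'x set \<Rightarrow> 'y set \<Rightarrow> bool" where
  "hs_summable A X Y \<equiv> (\<lambda>(x, y). (cmod (A x y))\<^sup>2) summable_on X \<times> Y"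

abbreviation hs_norm2 :: "('x \<Rightarrow> 'y \<Rightarrow> complex) \<Rightarrow> 'x set \<Rightarrow> 'y set \<Rightarrow> real" where
  "hs_norm2 A X Y \<equiv> \<Sum>\<^sub>\<infinity>(x, y)\<in>X \<times> Y. (cmod (A x y))\<^sup>2"

abbreviation mat_mult ::
    "('x \<Rightarrow> 'w \<Rightarrow> complex) \<Rightarrow> 'w set \<Rightarrow> ('w \<Rightarrow> 'y \<Rightarrow> complex) \<Rightarrow> 'x \<Rightarrow> 'y \<Rightarrow> complex" where
  "mat_mult A W B \<equiv> \<lambda>x y. \<Sum>\<^sub>\<infinity>w\<in>W. A x w * B w y"

lemma hs_summable_row:
  assumes "hs_summable A X Y" "x \<in> X"
  shows "(\<lambda>y. (cmod (A x y))\<^sup>2) summable_on Y"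
  using summable_on_SigmaD1[where f="\<lambda>x y. (cmod (A x y))\<^sup>2", OF assms] .

lemma hs_summable_transpose_iff: "hs_summable (\<lambda>y x. A x y) Y X \<longleftrightarrow> hs_summable A X Y"
  by (subst summable_on_swap) (simp add: case_prod_unfold)

lemma hs_summable_col:
  assumes "hs_summable A X Y" "y \<in> Y"
  shows "(\<lambda>x. (cmod (A x y))\<^sup>2) summable_on X"
  using hs_summable_row[OF hs_summable_transpose_iff[THEN iffD2, OF assms(1)] assms(2)] .

lemma hs_norm2_transpose: "hs_norm2 (\<lambda>y x. A x y) Y X = hs_norm2 A X Y"
  by (rule infsum_reindex_bij_witness[of _ prod.swap prod.swap]) auto

lemma
  assumes "hs_summable A X Y"
  shows hs_summable_row_sums: "(\<lambda>x. \<Sum>\<^sub>\<infinity>y\<in>Y. (cmod (A x y))\<^sup>2) summable_on X"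
    and hs_norm2_row_sums: "(\<Sum>\<^sub>\<infinity>x\<in>X. \<Sum>\<^sub>\<infinity>y\<in>Y. (cmod (A x y))\<^sup>2) = hs_norm2 A X Y"
  using summable_on_Sigma_banach[where f="\<lambda>x y. (cmod (A x y))\<^sup>2", OF assms]
    infsum_Sigma'_banach[where f="\<lambda>x y. (cmod (A x y))\<^sup>2", OF assms] by simp_all

lemma
  assumes A: "hs_summable A X W" and B: "hs_summable B W Y"
  shows hs_summable_mat_mult: "hs_summable (mat_mult A W B) X Y"
    and hs_norm2_mat_mult_le: "hs_norm2 (mat_mult A W B) X Y \<le> hs_norm2 A X W * hs_norm2 B W Y"
proof -
  define a where "a x = (\<Sum>\<^sub>\<infinity>w\<in>W. (cmod (A x w))\<^sup>2)" for x
  define b where "b y = (\<Sum>\<^sub>\<infinity>w\<in>W. (cmod (B w y))\<^sup>2)" for y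
  have B': "hs_summable (\<lambda>y w. B w y) Y W"
    using hs_summable_transpose_iff[THEN iffD2, OF B] .
  have a: "(\<lambda>x. norm (a x)) summable_on X"
    unfolding a_def using hs_summable_row_sums[OF A]
    by (rule summable_on_iff_abs_summable_on_real[THEN iffD1])
  have b: "(\<lambda>y. norm (b y)) summable_on Y"
    unfolding b_def using hs_summable_row_sums[OF B']
    by (rule summable_on_iff_abs_summable_on_real[THEN iffD1])
  have pointwise: "(cmod (mat_mult A W B x y))\<^sup>2 \<le> a x * b y" if "x \<in> X" "y \<in> Y" for x y
    unfolding a_def b_def
    using infsum_Cauchy_Schwarz[OF hs_summable_row[OF A that(1)] hs_summable_col[OF B that(2)]] .
  show S: "hs_summable (mat_mult A W B) X Y"
    by (rule summable_on_comparison_test[OF summable_on_product[OF a b]]) (auto intro: pointwise)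
  have "hs_norm2 (mat_mult A W B) X Y \<le> (\<Sum>\<^sub>\<infinity>(x, y)\<in>X \<times> Y. a x * b y)"
    by (rule infsum_mono[OF S summable_on_product[OF a b]]) (auto intro: pointwise)
  also have "\<dots> = infsum a X * infsum b Y"
    by (rule infsum_product[OF a b])
  also have "\<dots> = hs_norm2 A X W * hs_norm2 B W Y"
    unfolding a_def b_def hs_norm2_row_sums[OF A] hs_norm2_row_sums[OF B'] hs_norm2_transpose[of B] ..
  finally show "hs_norm2 (mat_mult A W B) X Y \<le> hs_norm2 A X W * hs_norm2 B W Y" .
qed

lemma summable_on_mat_mult_expansion:
  assumes A: "hs_summable A X W" and B: "hs_summable B W Y"
  shows "(\<lambda>((x, y), (w, w')). A x w * B w y * cnj (A x w' * B w' y)) summable_on (X \<times> Y) \<times> (W \<times> W)"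
proof -
  have "(\<lambda>(p, q). (\<lambda>(x, w). (cmod (A x w))\<^sup>2) p * (\<lambda>(w', y). (cmod (B w' y))\<^sup>2) q)
      summable_on (X \<times> W) \<times> (W \<times> Y)"
    by (rule summable_on_product) (use A B in \<open>simp_all add: case_prod_unfold\<close>)
  then have prod: "(\<lambda>((x, w), (w', y)). (cmod (A x w))\<^sup>2 * (cmod (B w' y))\<^sup>2) summable_on (X \<times> W) \<times> (W \<times> Y)"
    by (simp add: case_prod_unfold)
  have H1: "(\<lambda>((x, y), (w, w')). (cmod (A x w))\<^sup>2 * (cmod (B w' y))\<^sup>2) summable_on (X \<times> Y) \<times> (W \<times> W)"
    using prod by (subst summable_on_reindex_bij_witness[where j="\<lambda>((x, y), (w, w')). ((x, w), (w', y))"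
        and i="\<lambda>((x, w), (w', y)). ((x, y), (w, w'))" and T="(X \<times> W) \<times> (W \<times> Y)"
        and h="\<lambda>((x, w), (w', y)). (cmod (A x w))\<^sup>2 * (cmod (B w' y))\<^sup>2"]) auto
  have H2: "(\<lambda>((x, y), (w, w')). (cmod (A x w'))\<^sup>2 * (cmod (B w y))\<^sup>2) summable_on (X \<times> Y) \<times> (W \<times> W)"
    using prod by (subst summable_on_reindex_bij_witness[where j="\<lambda>((x, y), (w, w')). ((x, w'), (w, y))"
        and i="\<lambda>((x, w'), (w, y)). ((x, y), (w, w'))" and T="(X \<times> W) \<times> (W \<times> Y)"
        and h="\<lambda>((x, w), (w', y)). (cmod (A x w))\<^sup>2 * (cmod (B w' y))\<^sup>2"]) auto
  have bound: "norm (A x w * B w y * cnj (A x w' * B w' y))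
      \<le> (cmod (A x w))\<^sup>2 * (cmod (B w' y))\<^sup>2 + (cmod (A x w'))\<^sup>2 * (cmod (B w y))\<^sup>2"
    for x y w w'
  proof -
    have "norm (A x w * B w y * cnj (A x w' * B w' y))
        = (cmod (A x w) * cmod (B w' y)) * (cmod (A x w') * cmod (B w y))"
      by (simp add: norm_mult mult_ac)
    moreover have "0 \<le> (cmod (A x w) * cmod (B w' y)) * (cmod (A x w') * cmod (B w y))"
      by simp
    ultimately show ?thesis
      using sum_squares_bound[of "cmod (A x w) * cmod (B w' y)" "cmod (A x w') * cmod (B w y)"]
      unfolding power_mult_distrib by linarith
  qed
  have "(\<lambda>z. norm ((\<lambda>((x, y), (w, w')). A x w * B w y * cnj (A x w' * B w' y)) z))
      summable_on (X \<times> Y) \<times> (W \<times> W)"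
    by (rule Infinite_Sum.abs_summable_on_comparison_test'[OF summable_on_add[OF H1 H2]])
       (clarsimp simp only: case_prod_conv bound)
  then show ?thesis
    by (rule abs_summable_summable)
qed

lemma hs_norm2_mat_mult_eq_infsum:
  assumes A: "hs_summable A X W" and B: "hs_summable B W Y"
  shows "complex_of_real (hs_norm2 (mat_mult A W B) X Y)
    = (\<Sum>\<^sub>\<infinity>(w, w')\<in>W \<times> W. (\<Sum>\<^sub>\<infinity>x\<in>X. A x w * cnj (A x w')) * (\<Sum>\<^sub>\<infinity>y\<in>Y. B w y * cnj (B w' y)))"
proof -
  have square: "complex_of_real ((cmod (mat_mult A W B x y))\<^sup>2)
      = (\<Sum>\<^sub>\<infinity>(w, w')\<in>W \<times> W. A x w * B w y * cnj (A x w' * B w' y))" if "x \<in> X" "y \<in> Y" for x y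
    using of_real_norm_infsum_square[OF norm_summable_on_mult[OF
          hs_summable_row[OF A that(1)] hs_summable_col[OF B that(2)]]] .
  have factor: "(\<Sum>\<^sub>\<infinity>(x, y)\<in>X \<times> Y. A x w * B w y * cnj (A x w' * B w' y))
      = (\<Sum>\<^sub>\<infinity>x\<in>X. A x w * cnj (A x w')) * (\<Sum>\<^sub>\<infinity>y\<in>Y. B w y * cnj (B w' y))"
    if "w \<in> W" "w' \<in> W" for w w'
  proof -
    have "(\<lambda>x. norm (A x w * cnj (A x w'))) summable_on X"
      using norm_summable_on_mult[OF hs_summable_col[OF A that(1)], of "\<lambda>x. cnj (A x w')"]
        hs_summable_col[OF A that(2)] by simp
    moreover have "(\<lambda>y. norm (B w y * cnj (B w' y))) summable_on Y"
      using norm_summable_on_mult[OF hs_summable_row[OF B that(1)], of "\<lambda>y. cnj (B w' y)"]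
        hs_summable_row[OF B that(2)] by simp
    ultimately show ?thesis
      using infsum_product[of "\<lambda>x. A x w * cnj (A x w')" X "\<lambda>y. B w y * cnj (B w' y)" Y]
      by (simp add: mult_ac)
  qed
  have "complex_of_real (hs_norm2 (mat_mult A W B) X Y)
      = (\<Sum>\<^sub>\<infinity>(x, y)\<in>X \<times> Y. complex_of_real ((cmod (mat_mult A W B x y))\<^sup>2))"
    using infsumI[OF has_sum_of_real[OF has_sum_infsum[OF hs_summable_mat_mult[OF A B]]]]
    unfolding case_prod_unfold by (rule sym)
  also have "\<dots> = (\<Sum>\<^sub>\<infinity>(x, y)\<in>X \<times> Y. \<Sum>\<^sub>\<infinity>(w, w')\<in>W \<times> W. A x w * B w y * cnj (A x w' * B w' y))"
    by (rule infsum_cong) (auto simp: square simp del: of_real_power complex_cnj_mult)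
  also have "\<dots> = (\<Sum>\<^sub>\<infinity>(w, w')\<in>W \<times> W. \<Sum>\<^sub>\<infinity>(x, y)\<in>X \<times> Y. A x w * B w y * cnj (A x w' * B w' y))"
    using infsum_swap_banach[where f="\<lambda>(x, y) (w, w'). A x w * B w y * cnj (A x w' * B w' y)"
        and A="X \<times> Y" and B="W \<times> W"] summable_on_mat_mult_expansion[OF A B]
    by (simp add: case_prod_unfold)
  also have "\<dots> = (\<Sum>\<^sub>\<infinity>(w, w')\<in>W \<times> W.
      (\<Sum>\<^sub>\<infinity>x\<in>X. A x w * cnj (A x w')) * (\<Sum>\<^sub>\<infinity>y\<in>Y. B w y * cnj (B w' y)))"
    by (rule infsum_cong) (auto simp: factor simp del: complex_cnj_mult)
  finally show ?thesis .
qed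

lemma hs_norm2_mat_mult_le_half:
  assumes A: "hs_summable A X W" and B: "hs_summable B W Y"
  shows "hs_norm2 (mat_mult A W B) X Y
    \<le> 1/2 * hs_norm2 (\<lambda>w w'. \<Sum>\<^sub>\<infinity>x\<in>X. A x w * cnj (A x w')) W W
      + 1/2 * hs_norm2 (\<lambda>w w'. \<Sum>\<^sub>\<infinity>y\<in>Y. B w y * cnj (B w' y)) W W"
proof -
  define P where "P w w' = (\<Sum>\<^sub>\<infinity>x\<in>X. A x w * cnj (A x w'))" for w w'
  define Q where "Q w w' = (\<Sum>\<^sub>\<infinity>y\<in>Y. B w y * cnj (B w' y))" for w w'
  define N where "N = hs_norm2 (mat_mult A W B) X Y"
  have P: "hs_summable P W W"
    unfolding P_def
    by (rule hs_summable_mat_mult[OF hs_summable_transpose_iff[THEN iffD2, OF A]]) (use A in simp)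
  have Q: "hs_summable Q W W"
    unfolding Q_def
    by (rule hs_summable_mat_mult[OF B]) (use hs_summable_transpose_iff[THEN iffD2, OF B] in simp)
  have "N\<^sup>2 = (cmod (\<Sum>\<^sub>\<infinity>z\<in>W \<times> W. P (fst z) (snd z) * Q (fst z) (snd z)))\<^sup>2"
    using arg_cong[OF hs_norm2_mat_mult_eq_infsum[OF A B], of cmod]
    unfolding N_def P_def Q_def by (simp add: case_prod_unfold infsum_nonneg)
  also have "\<dots> \<le> hs_norm2 P W W * hs_norm2 Q W W"
    using infsum_Cauchy_Schwarz[of "\<lambda>z. P (fst z) (snd z)" "W \<times> W" "\<lambda>z. Q (fst z) (snd z)"] P Q
    by (simp add: case_prod_unfold)
  finally have "N \<le> sqrt (hs_norm2 P W W * hs_norm2 Q W W)"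
    by (simp add: real_le_rsqrt)
  also have "\<dots> \<le> (hs_norm2 P W W + hs_norm2 Q W W) / 2"
    by (rule arith_geo_mean_sqrt) (auto intro: infsum_nonneg)
  finally show ?thesis
    unfolding N_def P_def Q_def by simp
qed

section \<open>Symmetrization\<close>

lemma tnorm_nonneg: "0 \<le> tnorm a b F"
  unfolding tnorm_def by (auto intro: infsum_nonneg)

lemma tnorm_square: "(tnorm a b F)\<^sup>2 = (\<Sum>\<^sub>\<infinity>z\<in>idx a b. (cmod (F z))\<^sup>2)"
  unfolding tnorm_def by (simp add: infsum_nonneg case_prod_unfold)

lemma in_tensor_iff: "in_tensor a b F \<longleftrightarrow> (\<lambda>z. (cmod (F z))\<^sup>2) summable_on idx a b"
  unfolding in_tensor_def by (simp add: case_prod_unfold)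

lemma perm_list_length [simp]: "length (perm_list \<sigma> xs) = length xs"
  by (simp add: perm_list_def)

lemma perm_list_nth [simp]: "i < length xs \<Longrightarrow> perm_list \<sigma> xs ! i = xs ! \<sigma> i"
  by (simp add: perm_list_def)

lemma perm_list_inv_perm_list:
  assumes "\<sigma> permutes {..<n}" "length xs = n"
  shows "perm_list (inv \<sigma>) (perm_list \<sigma> xs) = xs"
proof (rule nth_equalityI)
  fix i assume "i < length (perm_list (inv \<sigma>) (perm_list \<sigma> xs))"
  with assms have "i < n" "inv \<sigma> i < n"
    using permutes_in_image[OF permutes_inv[OF assms(1)]] by auto
  then show "perm_list (inv \<sigma>) (perm_list \<sigma> xs) ! i = xs ! i"
    using assms by (simp add: permutes_inverses(1)[OF assms(1)])
qed simp

lemma perm_list_perm_list_inv: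
  assumes "\<sigma> permutes {..<n}" "length xs = n"
  shows "perm_list \<sigma> (perm_list (inv \<sigma>) xs) = xs"
proof (rule nth_equalityI)
  fix i assume "i < length (perm_list \<sigma> (perm_list (inv \<sigma>) xs))"
  with assms have "i < n" "\<sigma> i < n"
    using permutes_in_image[OF assms(1)] by auto
  then show "perm_list \<sigma> (perm_list (inv \<sigma>) xs) ! i = xs ! i"
    using assms by (simp add: permutes_inverses(2)[OF assms(1)])
qed simp

lemma bij_betw_perm_list_idx:
  assumes \<sigma>: "\<sigma> permutes {..<n}" and \<tau>: "\<tau> permutes {..<m}"
  shows "bij_betw (\<lambda>(x, y). (perm_list \<sigma> x, perm_list \<tau> y)) (idx n m) (idx n m)"
  by (rule bij_betwI[where g="\<lambda>(x, y). (perm_list (inv \<sigma>) x, perm_list (inv \<tau>) y)"])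
     (auto simp: idx_def perm_list_inv_perm_list[OF \<sigma>] perm_list_perm_list_inv[OF \<sigma>]
        perm_list_inv_perm_list[OF \<tau>] perm_list_perm_list_inv[OF \<tau>])

lemma norm_sum_square_le_card_mult:
  fixes c :: "'a \<Rightarrow> 'b::real_normed_vector"
  shows "(norm (\<Sum>p\<in>P. c p))\<^sup>2 \<le> card P * (\<Sum>p\<in>P. (norm (c p))\<^sup>2)"
proof -
  have "(norm (\<Sum>p\<in>P. c p))\<^sup>2 \<le> (\<Sum>p\<in>P. norm (c p) * 1)\<^sup>2"
    using norm_sum[of c P] by (simp add: power_mono)
  also have "\<dots> \<le> (\<Sum>p\<in>P. (norm (c p))\<^sup>2) * (\<Sum>p\<in>P. 1\<^sup>2)"
    by (rule Cauchy_Schwarz_ineq_sum)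
  finally show ?thesis
    by (simp add: mult.commute)
qed

lemma tnorm_symmetrize_le:
  assumes C: "in_tensor n m C"
  shows "tnorm n m (symmetrize n m C) \<le> tnorm n m C"
proof -
  define PP where "PP = {\<sigma>. \<sigma> permutes {..<n}} \<times> {\<tau>. \<tau> permutes {..<m}}"
  define N :: real where "N = fact n * fact m"
  define c where "c z p = C (perm_list (fst p) (fst z), perm_list (snd p) (snd z))" for z p
  have "finite PP" "card PP = N" "N > 0"
    unfolding PP_def N_def by (simp_all add: finite_permutations card_cartesian_product card_permutations)
  have sym: "symmetrize n m C z = (\<Sum>p\<in>PP. c z p) / of_real N" for z
    unfolding symmetrize_def c_def PP_def N_def
    by (simp add: sum.cartesian_product case_prod_unfold)
  have each: "((\<lambda>z. (cmod (c z p))\<^sup>2) has_sum (tnorm n m C)\<^sup>2) (idx n m)" if "p \<in> PP" for p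
  proof -
    have "bij_betw (\<lambda>(x, y). (perm_list (fst p) x, perm_list (snd p) y)) (idx n m) (idx n m)"
      using that by (intro bij_betw_perm_list_idx) (auto simp: PP_def)
    from has_sum_reindex_bij_betw[OF this, of "\<lambda>z. (cmod (C z))\<^sup>2"] show ?thesis
      using has_sum_infsum[OF C[unfolded in_tensor_iff]]
      by (simp add: c_def tnorm_square case_prod_unfold)
  qed
  have "((\<lambda>z. 1/N * (\<Sum>p\<in>PP. (cmod (c z p))\<^sup>2)) has_sum 1/N * (\<Sum>p\<in>PP. (tnorm n m C)\<^sup>2)) (idx n m)"
    by (intro has_sum_cmult_right has_sum_sum \<open>finite PP\<close> each)
  then have mean: "((\<lambda>z. 1/N * (\<Sum>p\<in>PP. (cmod (c z p))\<^sup>2)) has_sum (tnorm n m C)\<^sup>2) (idx n m)"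
    using \<open>card PP = N\<close> \<open>N > 0\<close> by simp
  have pointwise: "(cmod (symmetrize n m C z))\<^sup>2 \<le> 1/N * (\<Sum>p\<in>PP. (cmod (c z p))\<^sup>2)" for z
  proof -
    have "(cmod (symmetrize n m C z))\<^sup>2 = (cmod (\<Sum>p\<in>PP. c z p))\<^sup>2 / N\<^sup>2"
      using \<open>N > 0\<close> by (simp add: sym norm_divide power_divide)
    also have "\<dots> \<le> N * (\<Sum>p\<in>PP. (cmod (c z p))\<^sup>2) / N\<^sup>2"
      using norm_sum_square_le_card_mult[of "c z" PP] \<open>card PP = N\<close>
      by (intro divide_right_mono) simp_all
    finally show ?thesis
      using \<open>N > 0\<close> by (simp add: power2_eq_square)
  qed
  have S: "(\<lambda>z. (cmod (symmetrize n m C z))\<^sup>2) summable_on idx n m"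
    by (rule summable_on_comparison_test[OF has_sum_imp_summable[OF mean]]) (use pointwise in auto)
  have "(tnorm n m (symmetrize n m C))\<^sup>2 \<le> (tnorm n m C)\<^sup>2"
    unfolding tnorm_square[of n m "symmetrize n m C"]
    by (rule has_sum_mono[OF has_sum_infsum[OF S] mean]) (rule pointwise)
  then show ?thesis
    by (rule power2_le_imp_le) (rule tnorm_nonneg)
qed

section \<open>Contractions as matrix products\<close>

definition rotate_perm :: "nat \<Rightarrow> nat \<Rightarrow> nat \<Rightarrow> nat" where
  "rotate_perm n r i = (if i < n then if i < n - r then i + r else i - (n - r) else i)"

lemma rotate_perm_permutes:
  assumes "r \<le> n"
  shows "rotate_perm n r permutes {..<n}"
proof (rule bij_imp_permutes)
  show "bij_betw (rotate_perm n r) {..<n} {..<n}"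
    unfolding rotate_perm_def
    by (rule bij_betwI[where g="\<lambda>i. if i < n then if i < r then i + (n - r) else i - r else i"])
       (use assms in auto)
qed (simp add: rotate_perm_def)

lemma perm_list_rotate_perm:
  assumes "length xs = r" "length xs + length ys = n"
  shows "perm_list (rotate_perm n r) (xs @ ys) = ys @ xs"
  by (rule nth_equalityI) (use assms in \<open>auto simp: perm_list_def rotate_perm_def nth_append\<close>)

lemma in_sym_tensor_swap:
  assumes F: "in_sym_tensor a b F"
    and k: "length k1 + length k2 = a" and m: "length m1 + length m2 = b"
  shows "F (k1 @ k2, m1 @ m2) = F (k2 @ k1, m2 @ m1)"
proof -
  have "rotate_perm a (length k1) permutes {..<a}" "rotate_perm b (length m1) permutes {..<b}"
    using k m by (simp_all add: rotate_perm_permutes)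
  then have "F (perm_list (rotate_perm a (length k1)) (k1 @ k2), perm_list (rotate_perm b (length m1)) (m1 @ m2))
      = F (k1 @ k2, m1 @ m2)"
    using F k m unfolding in_sym_tensor_def by simp
  then show ?thesis
    using k m by (simp add: perm_list_rotate_perm)
qed

text \<open>A tensor is read as a matrix whose rows are indexed by its free coordinates and whose
  columns by the contracted ones.  In the second factor of a contraction the contracted
  coordinates w = (u, v) appear crosswise, as in g(t' v; s' u).\<close>

definition append_pair :: "'a list \<times> 'a list \<Rightarrow> 'a list \<times> 'a list \<Rightarrow> 'a list \<times> 'a list" where
  "append_pair x y = (fst x @ fst y, snd x @ snd y)"

definition left_matrix ::
    "('a list \<times> 'a list \<Rightarrow> complex) \<Rightarrow> 'a list \<times> 'a list \<Rightarrow> 'a list \<times> 'a list \<Rightarrow> complex" where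
  "left_matrix F x w = F (append_pair x w)"

definition right_matrix ::
    "('a list \<times> 'a list \<Rightarrow> complex) \<Rightarrow> 'a list \<times> 'a list \<Rightarrow> 'a list \<times> 'a list \<Rightarrow> complex" where
  "right_matrix F w y = F (append_pair y (prod.swap w))"

lemma bij_betw_append_pair:
  "bij_betw (\<lambda>(x, y). append_pair x y) (idx a b \<times> idx c d) (idx (a + c) (b + d))"
  by (rule bij_betwI[where g="\<lambda>z. ((take a (fst z), take b (snd z)), (drop a (fst z), drop b (snd z)))"])
     (auto simp: idx_def append_pair_def)

lemma bij_betw_append_pair_swap:
  "bij_betw (\<lambda>(w, y). append_pair y (prod.swap w)) (idx i j \<times> idx c d) (idx (c + j) (d + i))"
  by (rule bij_betwI[where g="\<lambda>z. ((drop d (snd z), drop c (fst z)), (take c (fst z), take d (snd z)))"])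
     (auto simp: idx_def append_pair_def)

lemma
  assumes g: "bij_betw g (X \<times> Y) S" and A: "\<And>x y. x \<in> X \<Longrightarrow> y \<in> Y \<Longrightarrow> A x y = F (g (x, y))"
  shows hs_summable_reindex: "hs_summable A X Y \<longleftrightarrow> (\<lambda>z. (cmod (F z))\<^sup>2) summable_on S"
    and hs_norm2_reindex: "hs_norm2 A X Y = (\<Sum>\<^sub>\<infinity>z\<in>S. (cmod (F z))\<^sup>2)"
proof -
  have eq: "(\<lambda>(x, y). (cmod (A x y))\<^sup>2) z = (cmod (F (g z)))\<^sup>2" if "z \<in> X \<times> Y" for z
    using that A by auto
  have "hs_summable A X Y \<longleftrightarrow> (\<lambda>z. (cmod (F (g z)))\<^sup>2) summable_on X \<times> Y"
    by (rule summable_on_cong[OF eq])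
  also have "\<dots> \<longleftrightarrow> (\<lambda>z. (cmod (F z))\<^sup>2) summable_on S"
    by (rule summable_on_reindex_bij_betw[OF g])
  finally show "hs_summable A X Y \<longleftrightarrow> (\<lambda>z. (cmod (F z))\<^sup>2) summable_on S" .
  have "hs_norm2 A X Y = (\<Sum>\<^sub>\<infinity>z\<in>X \<times> Y. (cmod (F (g z)))\<^sup>2)"
    by (rule infsum_cong[OF eq])
  also have "\<dots> = (\<Sum>\<^sub>\<infinity>z\<in>S. (cmod (F z))\<^sup>2)"
    by (rule infsum_reindex_bij_betw[OF g])
  finally show "hs_norm2 A X Y = (\<Sum>\<^sub>\<infinity>z\<in>S. (cmod (F z))\<^sup>2)" .
qed

lemma
  assumes "i \<le> a" "j \<le> b"
  shows hs_summable_left_matrix_iff: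
      "hs_summable (left_matrix F) (idx (a - i) (b - j)) (idx i j) \<longleftrightarrow> in_tensor a b F"
    and hs_norm2_left_matrix:
      "hs_norm2 (left_matrix F) (idx (a - i) (b - j)) (idx i j) = (tnorm a b F)\<^sup>2"
proof -
  have bij: "bij_betw (\<lambda>(x, w). append_pair x w) (idx (a - i) (b - j) \<times> idx i j) (idx a b)"
    using bij_betw_append_pair[of "a - i" "b - j" i j] assms by simp
  show "hs_summable (left_matrix F) (idx (a - i) (b - j)) (idx i j) \<longleftrightarrow> in_tensor a b F"
    using hs_summable_reindex[OF bij, of "left_matrix F" F] by (simp add: left_matrix_def in_tensor_iff)
  show "hs_norm2 (left_matrix F) (idx (a - i) (b - j)) (idx i j) = (tnorm a b F)\<^sup>2"
    using hs_norm2_reindex[OF bij, of "left_matrix F" F] by (simp add: left_matrix_def tnorm_square)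
qed

lemma
  assumes "j \<le> c" "i \<le> d"
  shows hs_summable_right_matrix_iff:
      "hs_summable (right_matrix F) (idx i j) (idx (c - j) (d - i)) \<longleftrightarrow> in_tensor c d F"
    and hs_norm2_right_matrix:
      "hs_norm2 (right_matrix F) (idx i j) (idx (c - j) (d - i)) = (tnorm c d F)\<^sup>2"
proof -
  have bij: "bij_betw (\<lambda>(w, y). append_pair y (prod.swap w)) (idx i j \<times> idx (c - j) (d - i)) (idx c d)"
    using bij_betw_append_pair_swap[of i j "c - j" "d - i"] assms by simp
  show "hs_summable (right_matrix F) (idx i j) (idx (c - j) (d - i)) \<longleftrightarrow> in_tensor c d F"
    using hs_summable_reindex[OF bij, of "right_matrix F" F] by (simp add: right_matrix_def in_tensor_iff)
  show "hs_norm2 (right_matrix F) (idx i j) (idx (c - j) (d - i)) = (tnorm c d F)\<^sup>2"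
    using hs_norm2_reindex[OF bij, of "right_matrix F" F] by (simp add: right_matrix_def tnorm_square)
qed

lemma contr_append_pair:
  assumes "x \<in> idx (a - i) (b - j)"
  shows "contr a b i j F G (append_pair x y) = mat_mult (left_matrix F) (idx i j) (right_matrix G) x y"
  using assms
  by (cases x) (simp add: contr_def append_pair_def left_matrix_def right_matrix_def idx_def case_prod_unfold)

lemma
  assumes "i \<le> a" "i \<le> d" "j \<le> b" "j \<le> c"
  shows in_tensor_contr_iff: "in_tensor (a + c - i - j) (b + d - i - j) (contr a b i j F G)
      \<longleftrightarrow> hs_summable (mat_mult (left_matrix F) (idx i j) (right_matrix G)) (idx (a - i) (b - j)) (idx (c - j) (d - i))"
    and tnorm_contr_square: "(tnorm (a + c - i - j) (b + d - i - j) (contr a b i j F G))\<^sup>2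
      = hs_norm2 (mat_mult (left_matrix F) (idx i j) (right_matrix G)) (idx (a - i) (b - j)) (idx (c - j) (d - i))"
proof -
  have "a - i + (c - j) = a + c - i - j" "b - j + (d - i) = b + d - i - j"
    using assms by simp_all
  then have bij: "bij_betw (\<lambda>(x, y). append_pair x y)
      (idx (a - i) (b - j) \<times> idx (c - j) (d - i)) (idx (a + c - i - j) (b + d - i - j))"
    using bij_betw_append_pair[of "a - i" "b - j" "c - j" "d - i"] by simp
  have entry: "mat_mult (left_matrix F) (idx i j) (right_matrix G) x y
      = contr a b i j F G ((\<lambda>(x, y). append_pair x y) (x, y))" if "x \<in> idx (a - i) (b - j)" for x y
    using contr_append_pair[OF that] by simp
  show "in_tensor (a + c - i - j) (b + d - i - j) (contr a b i j F G)
      \<longleftrightarrow> hs_summable (mat_mult (left_matrix F) (idx i j) (right_matrix G)) (idx (a - i) (b - j)) (idx (c - j) (d - i))"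
    using hs_summable_reindex[where F="contr a b i j F G", OF bij entry] by (simp add: in_tensor_iff)
  show "(tnorm (a + c - i - j) (b + d - i - j) (contr a b i j F G))\<^sup>2
      = hs_norm2 (mat_mult (left_matrix F) (idx i j) (right_matrix G)) (idx (a - i) (b - j)) (idx (c - j) (d - i))"
    using hs_norm2_reindex[where F="contr a b i j F G", OF bij entry] by (simp add: tnorm_square)
qed

lemma tnorm_contr_rev_conj_left:
  fixes F :: "'a list \<times> 'a list \<Rightarrow> complex"
  assumes F: "in_sym_tensor a b F" and "i \<le> a" "j \<le> b"
  shows "(tnorm (i + j) (i + j) (contr a b (a - i) (b - j) F (rev_conj F)))\<^sup>2
    = hs_norm2 (\<lambda>w w'. \<Sum>\<^sub>\<infinity>x\<in>idx (a - i) (b - j). left_matrix F x w * cnj (left_matrix F x w'))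
        (idx i j) (idx i j)"
proof -
  have entry: "(\<Sum>\<^sub>\<infinity>x\<in>idx (a - i) (b - j). left_matrix F x w * cnj (left_matrix F x w'))
      = contr a b (a - i) (b - j) F (rev_conj F) ((\<lambda>(w, w'). append_pair w (prod.swap w')) (w, w'))"
    if "w \<in> idx i j" "w' \<in> idx i j" for w w'
  proof -
    obtain t s t' s' where w: "w = (t, s)" and w': "w' = (t', s')"
      by fastforce
    with that have len: "length t = i" "length s = j" "length t' = i" "length s' = j"
      by (simp_all add: idx_def)
    have "contr a b (a - i) (b - j) F (rev_conj F) (append_pair w (prod.swap w'))
        = (\<Sum>\<^sub>\<infinity>(u, v)\<in>idx (a - i) (b - j). F (t @ u, s @ v) * cnj (F (t' @ u, s' @ v)))"
      using len assms by (simp add: contr_def append_pair_def rev_conj_def w w')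
    also have "\<dots> = (\<Sum>\<^sub>\<infinity>x\<in>idx (a - i) (b - j). left_matrix F x w * cnj (left_matrix F x w'))"
    proof (rule infsum_cong, clarify)
      fix u v :: "'a list" assume "(u, v) \<in> idx (a - i) (b - j)"
      then have "length u = a - i" "length v = b - j"
        by (simp_all add: idx_def)
      then show "F (t @ u, s @ v) * cnj (F (t' @ u, s' @ v))
          = left_matrix F (u, v) w * cnj (left_matrix F (u, v) w')"
        using len assms in_sym_tensor_swap[OF F]
        by (simp add: left_matrix_def append_pair_def w w')
    qed
    finally show ?thesis
      by simp
  qed
  have bij: "bij_betw (\<lambda>(w, w'). append_pair w (prod.swap w')) (idx i j \<times> idx i j) (idx (i + j) (i + j))"
    by (rule bij_betwI[where g="\<lambda>z. ((take i (fst z), take j (snd z)), (drop j (snd z), drop i (fst z)))"])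
       (auto simp: idx_def append_pair_def)
  show ?thesis
    using hs_norm2_reindex[where F="contr a b (a - i) (b - j) F (rev_conj F)", OF bij entry]
    by (simp add: tnorm_square)
qed

lemma tnorm_contr_rev_conj_right:
  fixes F :: "'a list \<times> 'a list \<Rightarrow> complex"
  assumes F: "in_sym_tensor c d F" and "j \<le> c" "i \<le> d"
  shows "(tnorm (i + j) (i + j) (contr c d (c - j) (d - i) F (rev_conj F)))\<^sup>2
    = hs_norm2 (\<lambda>w w'. \<Sum>\<^sub>\<infinity>y\<in>idx (c - j) (d - i). right_matrix F w y * cnj (right_matrix F w' y))
        (idx i j) (idx i j)"
proof -
  have entry: "(\<Sum>\<^sub>\<infinity>y\<in>idx (c - j) (d - i). right_matrix F w y * cnj (right_matrix F w' y))
      = contr c d (c - j) (d - i) F (rev_conj F) ((\<lambda>(w, w'). append_pair (prod.swap w) w') (w, w'))"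
    if "w \<in> idx i j" "w' \<in> idx i j" for w w'
  proof -
    obtain u v u' v' where w: "w = (u, v)" and w': "w' = (u', v')"
      by fastforce
    with that have len: "length u = i" "length v = j" "length u' = i" "length v' = j"
      by (simp_all add: idx_def)
    have "contr c d (c - j) (d - i) F (rev_conj F) (append_pair (prod.swap w) w')
        = (\<Sum>\<^sub>\<infinity>(t, s)\<in>idx (c - j) (d - i). F (v @ t, u @ s) * cnj (F (v' @ t, u' @ s)))"
      using len assms by (simp add: contr_def append_pair_def rev_conj_def w w')
    also have "\<dots> = (\<Sum>\<^sub>\<infinity>y\<in>idx (c - j) (d - i). right_matrix F w y * cnj (right_matrix F w' y))"
    proof (rule infsum_cong, clarify)
      fix t s :: "'a list" assume "(t, s) \<in> idx (c - j) (d - i)"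
      then have "length t = c - j" "length s = d - i"
        by (simp_all add: idx_def)
      then show "F (v @ t, u @ s) * cnj (F (v' @ t, u' @ s))
          = right_matrix F w (t, s) * cnj (right_matrix F w' (t, s))"
        using len assms in_sym_tensor_swap[OF F]
        by (simp add: right_matrix_def append_pair_def w w')
    qed
    finally show ?thesis
      by simp
  qed
  have bij: "bij_betw (\<lambda>(w, w'). append_pair (prod.swap w) w') (idx i j \<times> idx i j) (idx (i + j) (i + j))"
    by (rule bij_betwI[where g="\<lambda>z. ((take i (snd z), take j (fst z)), (drop j (fst z), drop i (snd z)))"])
       (auto simp: idx_def append_pair_def)
  show ?thesis
    using hs_norm2_reindex[where F="contr c d (c - j) (d - i) F (rev_conj F)", OF bij entry]
    by (simp add: tnorm_square)
qed

theorem lemma3p7: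
  fixes F1 F2 :: "'b::countable list \<times> 'b list \<Rightarrow> complex"
    and p1 q1 p2 q2 i j :: nat
  assumes f1: "in_sym_tensor p1 q1 F1"
    and f2: "in_sym_tensor p2 q2 F2"
    and hi: "i \<le> min p1 q2" and hj: "j \<le> min q1 p2"
  shows "tnorm (p1 + p2 - i - j) (q1 + q2 - i - j)
           (symmetrize (p1 + p2 - i - j) (q1 + q2 - i - j) (contr p1 q1 i j F1 F2))
         \<le> tnorm (p1 + p2 - i - j) (q1 + q2 - i - j) (contr p1 q1 i j F1 F2)
       \<and> tnorm (p1 + p2 - i - j) (q1 + q2 - i - j) (contr p1 q1 i j F1 F2)
         \<le> tnorm p1 q1 F1 * tnorm p2 q2 F2
       \<and> (tnorm (p1 + p2 - i - j) (q1 + q2 - i - j) (contr p1 q1 i j F1 F2))\<^sup>2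
         \<le> (1/2) * (tnorm (i + j) (i + j) (contr p1 q1 (p1 - i) (q1 - j) F1 (rev_conj F1)))\<^sup>2
          + (1/2) * (tnorm (i + j) (i + j) (contr p2 q2 (p2 - j) (q2 - i) F2 (rev_conj F2)))\<^sup>2"
proof -
  from hi hj have i: "i \<le> p1" "i \<le> q2" and j: "j \<le> q1" "j \<le> p2"
    by simp_all
  have A: "hs_summable (left_matrix F1) (idx (p1 - i) (q1 - j)) (idx i j)"
    using f1 unfolding in_sym_tensor_def by (simp add: hs_summable_left_matrix_iff[OF i(1) j(1)])
  have B: "hs_summable (right_matrix F2) (idx i j) (idx (p2 - j) (q2 - i))"
    using f2 unfolding in_sym_tensor_def by (simp add: hs_summable_right_matrix_iff[OF j(2) i(2)])
  note contr_square = tnorm_contr_square[OF i(1) i(2) j(1) j(2), of F1 F2]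
  have C: "in_tensor (p1 + p2 - i - j) (q1 + q2 - i - j) (contr p1 q1 i j F1 F2)"
    using in_tensor_contr_iff[OF i(1) i(2) j(1) j(2)] hs_summable_mat_mult[OF A B] by (rule iffD2)
  have "(tnorm (p1 + p2 - i - j) (q1 + q2 - i - j) (contr p1 q1 i j F1 F2))\<^sup>2
      \<le> (tnorm p1 q1 F1 * tnorm p2 q2 F2)\<^sup>2"
    unfolding contr_square power_mult_distrib hs_norm2_left_matrix[OF i(1) j(1), symmetric]
      hs_norm2_right_matrix[OF j(2) i(2), symmetric]
    by (rule hs_norm2_mat_mult_le[OF A B])
  then have "tnorm (p1 + p2 - i - j) (q1 + q2 - i - j) (contr p1 q1 i j F1 F2)
      \<le> tnorm p1 q1 F1 * tnorm p2 q2 F2"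
    by (rule power2_le_imp_le) (simp add: tnorm_nonneg)
  moreover have "(tnorm (p1 + p2 - i - j) (q1 + q2 - i - j) (contr p1 q1 i j F1 F2))\<^sup>2
      \<le> (1/2) * (tnorm (i + j) (i + j) (contr p1 q1 (p1 - i) (q1 - j) F1 (rev_conj F1)))\<^sup>2
        + (1/2) * (tnorm (i + j) (i + j) (contr p2 q2 (p2 - j) (q2 - i) F2 (rev_conj F2)))\<^sup>2"
    unfolding contr_square tnorm_contr_rev_conj_left[OF f1 i(1) j(1)]
      tnorm_contr_rev_conj_right[OF f2 j(2) i(2)]
    by (rule hs_norm2_mat_mult_le_half[OF A B])
  ultimately show ?thesis
    using tnorm_symmetrize_le[OF C] by blast
qed

end
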